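(* Let $\mathcal{S}=\mathcal{V}\cup\{m\}$ with $m$ a mask state, and let $\alpha_t$ be a differentiable noise schedule on $[0,T]$ with $\alpha_0=1$, $\alpha_T=0$, $\alpha_t\in(0,1)$ and $\alpha_t'<0$ for $t\in(0,T)$. Consider the masked (absorbing) forward CTMC with rates $R_t(i,j)=-\frac{\alpha_t'}{\alpha_t}(e_j^\top e_m)\mathbf{1}_{\{i\ne m\}}$ ($i\ne j$), so that $q_{t|0}(\cdot\mid x_0)=\alpha_t x_0+(1-\alpha_t)e_m$ for $x_0\in\mathcal{V}$ (identified with its one-hot vector), with $p_{\text{data}}$ supported on $\mathcal{V}$. Let $x_\theta=x_\theta(x_t,t)$ be a probability vector on $\mathcal{V}$ and set $\gamma_t:=-\frac{\alpha_t'}{1-\alpha_t}$ and model rates $R^\theta_t(i,j)=\gamma_t\,e_j^\top(x_\theta-e_m)\mathbf{1}_{\{i=m\}}$, i.e. $\lambda^\theta_t(m)=\gamma_t$, $r^\theta_t(j\mid m)=e_j^\top x_\theta$ for $j\in\mathcal{V}$, and $R^\theta_t(i,\cdot)=0$ for $i\ne m$. Then \[ \mathcal{L}_{\mathrm{cond}}(\theta)=\mathbb{E}_{t\sim\mathcal{U}(0,T),\,x_0\sim p_{\text{data}},\,x_t\sim q_{t|0}(\cdot\mid x_0)}\Bigl[\frac{\alpha_t'}{1-\alpha_t}\,x_0^\top\log x_\theta\cdot\mathbf{1}_{\{x_t=m\}}\Bigr], \] where \[ \mathcal{L}_{\mathrm{cond}}(\theta):=\mathbb{E}_{t,\,x_0,\,i\sim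 q_{t|0}(\cdot\mid x_0)}\Bigl[\sum_{j\ne i}R^\theta_t(i,j)-\sum_{j\ne i}R_t(j,i)\frac{q_{t|0}(j\mid x_0)}{q_{t|0}(i\mid x_0)}\log\frac{R^\theta_t(i,j)}{R_t(j,i)}+\sum_{j\ne i}R_t(j,i)K\Bigl(\frac{q_{t|0}(j\mid x_0)}{q_{t|0}(i\mid x_0)}\Bigr)\Bigr] \] with $K(a)=a(\log a-1)$.
   Context: $e_j$ denotes the one-hot vector of state $j$; $\log x_\theta$ is taken componentwise. Terms with zero rate multiplying are interpreted via the convention $0\log0=0$ (so states $i\ne m$ contribute zero). *)

theory Defs
  imports "HOL-Analysis.Analysis" "HOL-Probability.Probability_Mass_Function"
begin

text \<open>State space S = V \<union> {m}, rendered as the type 'v option with the mask state m = None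
  and V = range Some. One-hot vectors are implicit: e_j^T v is the j-th component.\<close>

definition fwd_rate :: "(real \<Rightarrow> real) \<Rightarrow> (real \<Rightarrow> real) \<Rightarrow> real \<Rightarrow> 'v option \<Rightarrow> 'v option \<Rightarrow> real" where
  "fwd_rate alpha alpha' t i j =
     (if i \<noteq> j then (if j = None \<and> i \<noteq> None then - alpha' t / alpha t else 0)
      else (if i \<noteq> None then alpha' t / alpha t else 0))"

definition cond_marg :: "(real \<Rightarrow> real) \<Rightarrow> real \<Rightarrow> 'v \<Rightarrow> 'v option \<Rightarrow> real" where
  "cond_marg alpha t x0 j =
     (if j = Some x0 then alpha t else 0) + (if j = None then 1 - alpha t else 0)"

definition gamma_sched :: "(real \<Rightarrow> real) \<Rightarrow> (real \<Rightarrow> real) \<Rightarrow> real \<Rightarrow> real" where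
  "gamma_sched alpha alpha' t = - alpha' t / (1 - alpha t)"

definition model_rate :: "(real \<Rightarrow> real) \<Rightarrow> (real \<Rightarrow> real) \<Rightarrow> ('v option \<Rightarrow> real \<Rightarrow> 'v \<Rightarrow> real)
    \<Rightarrow> real \<Rightarrow> 'v option \<Rightarrow> 'v option \<Rightarrow> real" where
  "model_rate alpha alpha' xth t i j =
     (if i = None then gamma_sched alpha alpha' t * (case j of Some v \<Rightarrow> xth i t v | None \<Rightarrow> -1)
      else 0)"

definition Kfun :: "real \<Rightarrow> real" where
  "Kfun a = a * (ln a - 1)"

definition L_cond :: "(real \<Rightarrow> real) \<Rightarrow> (real \<Rightarrow> real) \<Rightarrow> real \<Rightarrow> 'v pmf
    \<Rightarrow> ('v option \<Rightarrow> real \<Rightarrow> 'v \<Rightarrow> real) \<Rightarrow> real" where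
  "L_cond alpha alpha' T p xth =
     (LINT t:{0..T}|lborel.
        (\<Sum>x0\<in>UNIV. pmf p x0 *
          (\<Sum>i\<in>UNIV. cond_marg alpha t x0 i *
            ((\<Sum>j\<in>UNIV - {i}. model_rate alpha alpha' xth t i j)
             - (\<Sum>j\<in>UNIV - {i}. fwd_rate alpha alpha' t j i
                  * (cond_marg alpha t x0 j / cond_marg alpha t x0 i)
                  * ln (model_rate alpha alpha' xth t i j / fwd_rate alpha alpha' t j i))
             + (\<Sum>j\<in>UNIV - {i}. fwd_rate alpha alpha' t j i
                  * Kfun (cond_marg alpha t x0 j / cond_marg alpha t x0 i)))))) / T"

end

theory Submission
  imports Defs
begin

text \<open>Only the mask state has a nonzero model exit rate, and the forward chain only ever jumps
  into the mask, so in the conditional loss the sole surviving terms are those with \<open>i = m\<close>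
  and \<open>j = x\<^sub>0\<close>. There \<open>q(x\<^sub>0)/q(m) = \<alpha>/(1 - \<alpha>)\<close> and the log rate ratio splits as
  \<open>ln (\<alpha>/(1 - \<alpha>)) + ln x\<^sub>\<theta>(x\<^sub>0)\<close>: the \<open>K\<close> term cancels the first summand, and the total
  model exit rate \<open>\<gamma>\<close> cancels the \<open>-1\<close> inside \<open>K\<close>, leaving \<open>\<alpha>'/(1 - \<alpha>) ln x\<^sub>\<theta>(x\<^sub>0)\<close>.
  This identity holds for every \<open>t \<in> (0, T)\<close>, and the endpoints are a null set.\<close>

lemma sum_option_Diff_None:
  fixes f :: "'v option \<Rightarrow> 'b::comm_monoid_add"
  shows "(\<Sum>j\<in>UNIV - {None}. f j) = (\<Sum>v\<in>UNIV. f (Some v))"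
proof -
  have "UNIV - {None} = range Some"
    using notin_range_Some by blast
  then have "sum f (UNIV - {None}) = sum f (range Some)"
    by (rule arg_cong)
  also have "\<dots> = (\<Sum>v\<in>UNIV. f (Some v))"
    by (simp add: sum.reindex)
  finally show ?thesis .
qed

lemma set_integral_cong_Ioo:
  fixes f g :: "real \<Rightarrow> real"
  assumes "\<And>t. t \<in> {a<..<b} \<Longrightarrow> f t = g t"
  shows "(LINT t:{a..b}|lborel. f t) = (LINT t:{a..b}|lborel. g t)"
  unfolding set_lebesgue_integral_def
proof (rule integral_discrete_difference[where X = "{a, b}"])
  fix t assume "t \<notin> {a, b}"
  then show "indicator {a..b} t *\<^sub>R f t = indicator {a..b} t *\<^sub>R g t"
    using assms[of t] by (cases "t \<in> {a..b}") auto
qed auto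

definition score_entropy_integrand ::
    "(real \<Rightarrow> real) \<Rightarrow> (real \<Rightarrow> real) \<Rightarrow> ('v option \<Rightarrow> real \<Rightarrow> 'v \<Rightarrow> real)
     \<Rightarrow> real \<Rightarrow> 'v \<Rightarrow> 'v option \<Rightarrow> real" where
  "score_entropy_integrand alpha alpha' xth t x0 i =
     (\<Sum>j\<in>UNIV - {i}. model_rate alpha alpha' xth t i j)
     - (\<Sum>j\<in>UNIV - {i}. fwd_rate alpha alpha' t j i
          * (cond_marg alpha t x0 j / cond_marg alpha t x0 i)
          * ln (model_rate alpha alpha' xth t i j / fwd_rate alpha alpha' t j i))
     + (\<Sum>j\<in>UNIV - {i}. fwd_rate alpha alpha' t j i
          * Kfun (cond_marg alpha t x0 j / cond_marg alpha t x0 i))"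

lemma L_cond_eq_score_entropy_integrand:
  "L_cond alpha alpha' T p xth =
     (LINT t:{0..T}|lborel.
        (\<Sum>x0\<in>UNIV. pmf p x0 *
          (\<Sum>i\<in>UNIV. cond_marg alpha t x0 i * score_entropy_integrand alpha alpha' xth t x0 i))) / T"
  unfolding L_cond_def score_entropy_integrand_def ..

lemma score_entropy_integrand_Some:
  "score_entropy_integrand alpha alpha' xth t x0 (Some v) = 0"
  by (simp add: score_entropy_integrand_def model_rate_def fwd_rate_def)

lemma model_exit_rate_mask:
  assumes "(\<Sum>v\<in>UNIV. xth None t v) = 1"
  shows "(\<Sum>j\<in>UNIV - {None}. model_rate alpha alpha' xth t None j) = gamma_sched alpha alpha' t"
  using assms by (simp add: sum_option_Diff_None model_rate_def flip: sum_distrib_left)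

lemma score_entropy_integrand_None:
  fixes xth :: "'v::finite option \<Rightarrow> real \<Rightarrow> 'v \<Rightarrow> real"
  assumes alpha: "0 < alpha t" "alpha t < 1"
    and pos: "0 < xth None t x0"
    and sum_one: "(\<Sum>v\<in>UNIV. xth None t v) = 1"
  shows "score_entropy_integrand alpha alpha' xth t x0 None
           = alpha' t / (1 - alpha t) * ln (xth None t x0)"
proof -
  define a where "a = alpha t"
  define d where "d = alpha' t"
  have a: "0 < a" "a < 1"
    using alpha by (simp_all add: a_def)
  have marg_ratio: "cond_marg alpha t x0 (Some v) / cond_marg alpha t x0 None
                      = (if v = x0 then a / (1 - a) else 0)" for v
    by (simp add: cond_marg_def a_def)
  have fwd_into_mask: "fwd_rate alpha alpha' t (Some v) None = - d / a" for v
    by (simp add: fwd_rate_def a_def d_def)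
  have model_from_mask: "model_rate alpha alpha' xth t None (Some v) = - d / (1 - a) * xth None t v" for v
    by (simp add: model_rate_def gamma_sched_def a_def d_def)
  have log_term: "(- d / a) * (a / (1 - a)) * ln ((- d / (1 - a) * xth None t x0) / (- d / a))
                    = - d / (1 - a) * (ln (a / (1 - a)) + ln (xth None t x0))"
  \<comment> \<open>For \<open>d = 0\<close> both sides vanish, so no sign condition on \<open>alpha'\<close> is needed.\<close>
  proof (cases "d = 0")
    case False
    then have ratio: "(- d / (1 - a) * xth None t x0) / (- d / a) = a / (1 - a) * xth None t x0"
      using a by (simp add: field_simps)
    have "ln (a / (1 - a) * xth None t x0) = ln (a / (1 - a)) + ln (xth None t x0)"
      using a pos by (intro ln_mult_pos) auto
    moreover have "(- d / a) * (a / (1 - a)) = - d / (1 - a)"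
      using a by simp
    ultimately show ?thesis
      using a unfolding ratio by simp
  qed simp
  have exit_rate: "(\<Sum>j\<in>UNIV - {None}. model_rate alpha alpha' xth t None j) = - d / (1 - a)"
    using sum_one by (simp add: model_exit_rate_mask gamma_sched_def a_def d_def)
  have log_summand: "fwd_rate alpha alpha' t (Some v) None
          * (cond_marg alpha t x0 (Some v) / cond_marg alpha t x0 None)
          * ln (model_rate alpha alpha' xth t None (Some v) / fwd_rate alpha alpha' t (Some v) None)
      = (if v = x0 then - d / (1 - a) * (ln (a / (1 - a)) + ln (xth None t x0)) else 0)" for v
  proof (cases "v = x0")
    case True
    then show ?thesis
      using log_term by (simp only: fwd_into_mask marg_ratio model_from_mask simp_thms if_True)
  qed (simp add: marg_ratio)
  have K_summand: "fwd_rate alpha alpha' t (Some v) None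
          * Kfun (cond_marg alpha t x0 (Some v) / cond_marg alpha t x0 None)
      = (if v = x0 then - d / (1 - a) * (ln (a / (1 - a)) - 1) else 0)" for v
    using a by (simp add: fwd_into_mask marg_ratio Kfun_def)
  have "score_entropy_integrand alpha alpha' xth t x0 None
          = - d / (1 - a) - (- d / (1 - a)) * (ln (a / (1 - a)) + ln (xth None t x0))
            + - d / (1 - a) * (ln (a / (1 - a)) - 1)"
    unfolding score_entropy_integrand_def exit_rate
    unfolding sum_option_Diff_None log_summand K_summand
    by simp
  also have "\<dots> = d / (1 - a) * ln (xth None t x0)"
    by (simp add: algebra_simps)
  finally show ?thesis
    by (simp add: a_def d_def)
qed

theorem corollary4p10:
  fixes alpha alpha' :: "real \<Rightarrow> real" and T :: real
    and p :: "('v::finite) pmf"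
    and xth :: "'v option \<Rightarrow> real \<Rightarrow> 'v \<Rightarrow> real"
  assumes "T > 0"
    and "\<forall>t\<in>{0..T}. (alpha has_real_derivative alpha' t) (at t within {0..T})"
    and "alpha 0 = 1" and "alpha T = 0"
    and "\<forall>t\<in>{0<..<T}. 0 < alpha t \<and> alpha t < 1 \<and> alpha' t < 0"
    and "\<forall>x t v. 0 < xth x t v"
    and "\<forall>x t. (\<Sum>v\<in>UNIV. xth x t v) = 1"
  shows "L_cond alpha alpha' T p xth =
    (LINT t:{0..T}|lborel.
       (\<Sum>x0\<in>UNIV. pmf p x0 *
         (\<Sum>xt\<in>UNIV. cond_marg alpha t x0 xt *
            (alpha' t / (1 - alpha t) * ln (xth xt t x0) * (if xt = None then 1 else 0))))) / T"
proof -
  \<comment> \<open>The schedule's differentiability, its boundary values and the sign of \<open>alpha'\<close> are not used.\<close>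
  have "score_entropy_integrand alpha alpha' xth t x0 xt
          = alpha' t / (1 - alpha t) * ln (xth xt t x0) * (if xt = None then 1 else 0)"
    if "t \<in> {0<..<T}" for t x0 xt
    using assms(5-7) that
    by (cases xt) (auto simp: score_entropy_integrand_Some score_entropy_integrand_None)
  then show ?thesis
    unfolding L_cond_eq_score_entropy_integrand
    by (intro arg_cong[where f = "\<lambda>I. I / T"] set_integral_cong_Ioo sum.cong refl) auto
qed

end
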